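(* Let $x\in[0,1]$. For every $d\ge1$ and every measurable $f:\mathbb R^d\to[-1,1]$, $F_4[f](x,x,x,x,x,x)\ge F_2[f](x)^2$.
   Context: For measurable $f:\mathbb R^d\to[-1,1]$, the rounding procedure $\mathrm{Round}_f$ applied to unit vectors $\mathbf v_1,\dots,\mathbf v_k\in\mathbb R^n$: sample independent $\mathbf r^{(1)},\dots,\mathbf r^{(d)}\sim N(\mathbf 0,I_n)$; then, independently for each $i$, set $X_i=1$ with probability $\frac{1+f(\mathbf r^{(1)}\cdot\mathbf v_i,\dots,\mathbf r^{(d)}\cdot\mathbf v_i)}{2}$ and $X_i=-1$ otherwise. $F_k[f](b_{1,2},\dots,b_{k-1,k})$ denotes $\mathbb E[X_1\cdots X_k]$ for any unit vectors with $\mathbf v_i\cdot\mathbf v_j=b_{i,j}$ (it depends only on these inner products); thus $F_2[f](x)=\mathbb E[X_1X_2]$ when $\mathbf v_1\cdot\mathbf v_2=x$, and $F_4[f](x,\dots,x)=\mathbb E[X_1X_2X_3X_4]$ when all six pairwise inner products equal $x$. *)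

theory Defs
  imports "HOL-Probability.Probability"
begin

text \<open>Standard Gaussian N(0,1) on the reals, and the uniform distribution on [0,1]
  (used as auxiliary coins to realise the randomized choice of each X_i).\<close>

definition std_gauss :: "real measure" where
  "std_gauss = density lborel (\<lambda>x. ennreal (std_normal_density x))"

definition unif01 :: "real measure" where
  "unif01 = uniform_measure lborel {0..1}"

text \<open>Sample space of Round_f for k vectors in R^n (index type 'n) with d Gaussian
  vectors (index type 'd): r (j,l) is the l-th coordinate of r^(j) (i.i.d. N(0,1)),
  and u i (i < k) are independent uniform coins on [0,1].\<close>

definition round_space :: "nat \<Rightarrow> (('d::finite \<times> 'n::finite \<Rightarrow> real) \<times> (nat \<Rightarrow> real)) measure" where
  "round_space k = (PiM UNIV (\<lambda>_. std_gauss)) \<Otimes>\<^sub>M (PiM {..<k} (\<lambda>_. unif01))"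

definition gauss_proj :: "('d::finite \<times> 'n::finite \<Rightarrow> real) \<Rightarrow> real^'n \<Rightarrow> real^'d" where
  "gauss_proj r v = (\<chi> j. \<Sum>l\<in>UNIV. r (j, l) * v $ l)"

text \<open>X_i = 1 with probability (1 + f(r^(1).v_i,...,r^(d).v_i))/2 (given r), else -1.\<close>

definition round_X :: "(real^'d \<Rightarrow> real) \<Rightarrow> (real^'n) list \<Rightarrow> nat \<Rightarrow>
    ('d::finite \<times> 'n::finite \<Rightarrow> real) \<times> (nat \<Rightarrow> real) \<Rightarrow> real" where
  "round_X f vs i \<omega> =
     (if snd \<omega> i \<le> (1 + f (gauss_proj (fst \<omega>) (vs ! i))) / 2 then 1 else -1)"

definition round_corr :: "(real^'d::finite \<Rightarrow> real) \<Rightarrow> (real^'n::finite) list \<Rightarrow> real" where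
  "round_corr f vs =
     (\<integral>\<omega>. (\<Prod>i<length vs. round_X f vs i \<omega>) \<partial>(round_space (length vs) :: (('d \<times> 'n \<Rightarrow> real) \<times> (nat \<Rightarrow> real)) measure))"

end

theory Submission
  imports Defs
begin

text \<open>
  Given the Gaussian vectors \<open>r\<close>, the \<open>X\<^sub>i\<close> are independent with means
  \<open>f(r \<cdot> v\<^sub>i)\<close>, so \<open>F\<^sub>k[f] = E \<Prod>\<^sub>i f(r \<cdot> v\<^sub>i)\<close>. By rotation invariance of the
  standard Gaussian this depends only on the Gram matrix of the \<open>v\<^sub>i\<close>. Unit vectors with
  all pairwise inner products \<open>x\<close> can be realised as \<open>\<surd>x e\<^sub>0 + \<surd>(1 - x) e\<^sub>i\<close>; their
  projections share the Gaussian component \<open>z = r \<cdot> e\<^sub>0\<close> and are independent given \<open>z\<close>,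
  so \<open>F\<^sub>k[f](x, \<dots>, x) = E\<^sub>z h(z)\<^sup>k\<close> where \<open>h = U f\<close> is the Ornstein-Uhlenbeck
  smoothing of \<open>f\<close> at correlation \<open>x\<close>. Hence \<open>F\<^sub>4 = E h\<^sup>4 \<ge> (E h\<^sup>2)\<^sup>2 = F\<^sub>2\<^sup>2\<close>,
  since the variance of \<open>h\<^sup>2\<close> is nonnegative.
\<close>

section \<open>Standard Gaussian vectors and rotation invariance\<close>

abbreviation iid_gauss :: "('i \<Rightarrow> real) measure" where
  "iid_gauss \<equiv> PiM UNIV (\<lambda>_. std_gauss)"

definition std_gauss_vec :: "(real^'k::finite) measure" where
  "std_gauss_vec = density lborel (\<lambda>v. ennreal (\<Prod>k\<in>UNIV. std_normal_density (v $ k)))"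

lemma prob_space_std_gauss: "prob_space std_gauss"
  unfolding std_gauss_def by (rule prob_space_normal_density) simp

lemma sets_std_gauss [simp, measurable_cong]: "sets std_gauss = sets borel"
  by (simp add: std_gauss_def)

lemma space_std_gauss [simp]: "space std_gauss = UNIV"
  by (simp add: std_gauss_def)

lemma prob_space_PiM_std_gauss: "prob_space (PiM I (\<lambda>_. std_gauss))"
  by (intro prob_space_PiM prob_space_std_gauss)

lemma measurable_PiM_std_gauss_eq [simp]:
  "measurable (PiM I (\<lambda>_. std_gauss)) N = measurable (PiM I (\<lambda>_. borel)) N"
  by (rule measurable_cong_sets) (auto intro!: sets_PiM_cong)

lemma borel_measurable_vec_lambda:
  assumes "\<And>j. (\<lambda>x. h x j) \<in> borel_measurable M"
  shows "(\<lambda>x. (\<chi> j. h x j) :: real^'d::finite) \<in> borel_measurable M"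
  unfolding borel_measurable_euclidean_space[where 'c="real^'d"]
  using assms by (auto simp: Basis_vec_def inner_axis)

lemma measurable_vec_nth_PiM [measurable]:
  "(vec_nth :: real^'k::finite \<Rightarrow> _) \<in> measurable borel (PiM UNIV (\<lambda>_. borel))"
  by (rule measurable_PiM_single') auto

lemma measurable_vec_lambda_PiM [measurable]:
  "(vec_lambda :: ('k::finite \<Rightarrow> real) \<Rightarrow> real^'k) \<in> borel_measurable (PiM UNIV (\<lambda>_. borel))"
  by (rule borel_measurable_vec_lambda) simp

lemma prod_std_normal_density_vec:
  "(\<Prod>k\<in>UNIV. std_normal_density ((v::real^'k::finite) $ k)) =
     (1 / sqrt (2 * pi)) ^ CARD('k) * exp (- (norm v)\<^sup>2 / 2)"
proof -
  have "(\<Prod>k\<in>UNIV. std_normal_density (v $ k)) = (1 / sqrt (2 * pi)) ^ CARD('k) * exp (\<Sum>k\<in>UNIV. - (v $ k)\<^sup>2 / 2)"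
    by (simp add: std_normal_density_def prod.distrib exp_sum flip: times_divide_eq_left)
  also have "(\<Sum>k\<in>UNIV. - (v $ k)\<^sup>2 / 2) = - (norm v)\<^sup>2 / 2"
    unfolding power2_norm_eq_inner by (simp add: inner_vec_def power2_eq_square sum_divide_distrib sum_negf)
  finally show ?thesis .
qed

lemma borel_measurable_orthogonal_transformation:
  fixes Q :: "'a::euclidean_space \<Rightarrow> 'a"
  shows "orthogonal_transformation Q \<Longrightarrow> Q \<in> borel_measurable borel"
  by (intro borel_measurable_continuous_onI linear_continuous_on)
    (simp add: orthogonal_transformation_linear flip: linear_conv_bounded_linear)

lemma lborel_distr_orthogonal_transformation:
  fixes Q :: "real^'k::{finite,wellorder} \<Rightarrow> real^'k::_"
  assumes Q: "orthogonal_transformation Q"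
  shows "distr lborel borel Q = lborel"
proof (rule lborel_eqI[symmetric])
  note Q_meas = borel_measurable_orthogonal_transformation[OF Q]
  have bij: "bij Q" using Q by (rule orthogonal_transformation_bij)
  have Qi: "orthogonal_transformation (inv Q)" using Q by (rule orthogonal_transformation_inv)
  fix l u :: "real^'k::_"
  assume lu: "\<And>b. b \<in> Basis \<Longrightarrow> l \<bullet> b \<le> u \<bullet> b"
  have box: "box l u \<in> lmeasurable" by simp
  have "emeasure (distr lborel borel Q) (box l u) = emeasure lebesgue (Q -` box l u)"
    using Q_meas measurable_sets_borel[OF Q_meas, of "box l u"]
    by (subst emeasure_distr) (auto simp: main_part_sets)
  also have "\<dots> = ennreal (measure lebesgue (inv Q ` box l u))"
    using bij measurable_orthogonal_image[OF Qi box]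
    by (simp add: bij_vimage_eq_inv_image emeasure_eq_measure2)
  also have "\<dots> = ennreal (measure lborel (box l u))"
    using measure_orthogonal_image[OF Qi box] by (simp add: measure_completion)
  also have "\<dots> = ennreal (\<Prod>b\<in>Basis. (u - l) \<bullet> b)"
    using lu by (subst measure_lborel_box_eq) auto
  finally show "emeasure (distr lborel borel Q) (box l u) = (\<Prod>b\<in>Basis. (u - l) \<bullet> b)"
    using lu by (simp add: prod_nonneg inner_diff_left)
qed simp

lemma nn_integral_lborel_vec_prod:
  fixes F :: "'k::finite \<Rightarrow> real \<Rightarrow> ennreal"
  assumes [measurable]: "\<And>k. F k \<in> borel_measurable borel"
  shows "(\<integral>\<^sup>+v. (\<Prod>k\<in>UNIV. F k ((v::real^'k) $ k)) \<partial>lborel) = (\<Prod>k\<in>UNIV. \<integral>\<^sup>+x. F k x \<partial>lborel)"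
proof -
  define idx where "idx b = (SOME k. b = axis k (1::real))" for b :: "real^'k"
  have idx: "idx (axis k 1) = k" for k
    unfolding idx_def by (rule some_equality) (auto simp: axis_eq_axis)
  have inj: "inj (\<lambda>k::'k. axis k (1::real))" by (auto simp: inj_def axis_eq_axis)
  have B: "(Basis :: (real^'k) set) = range (\<lambda>k. axis k 1)" by (auto simp: Basis_vec_def)
  have "(\<Prod>k\<in>UNIV. F k (v $ k)) = (\<Prod>b\<in>Basis. F (idx b) (v \<bullet> b))" for v :: "real^'k"
    unfolding B by (subst prod.reindex[OF inj]) (simp add: idx cart_eq_inner_axis)
  then have "(\<integral>\<^sup>+v. (\<Prod>k\<in>UNIV. F k ((v::real^'k) $ k)) \<partial>lborel) =
      (\<integral>\<^sup>+v. (\<Prod>b\<in>Basis. F (idx b) (v \<bullet> b)) \<partial>lborel)"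
    by simp
  also have "\<dots> = (\<Prod>b\<in>Basis. \<integral>\<^sup>+x. F (idx b) x \<partial>lborel)"
    by (rule nn_integral_lborel_prod) auto
  also have "\<dots> = (\<Prod>k\<in>UNIV. \<integral>\<^sup>+x. F k x \<partial>lborel)"
    unfolding B by (subst prod.reindex[OF inj]) (simp add: idx)
  finally show ?thesis .
qed

lemma iid_gauss_eq_distr_std_gauss_vec:
  "(iid_gauss :: ('k::finite \<Rightarrow> real) measure) = distr std_gauss_vec iid_gauss vec_nth"
proof -
  interpret product_prob_space "\<lambda>_::'k. std_gauss" UNIV
    by (simp add: product_prob_space_def product_sigma_finite_def prob_space_std_gauss
        prob_space_imp_sigma_finite product_prob_space_axioms_def)
  show ?thesis
  proof (rule PiM_eqI[symmetric])
    fix A :: "'k \<Rightarrow> real set"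
    assume "\<And>i. i \<in> UNIV \<Longrightarrow> A i \<in> sets std_gauss"
    then have A [measurable]: "A i \<in> sets borel" for i by simp
    let ?B = "{v::real^'k. \<forall>k. v $ k \<in> A k}"
    have B [measurable]: "?B \<in> sets borel" by measurable
    have vec_nth_meas: "vec_nth \<in> measurable std_gauss_vec (iid_gauss :: ('k \<Rightarrow> real) measure)"
      by (simp add: std_gauss_vec_def)
    have indicator_B: "indicator ?B v = (\<Prod>k\<in>UNIV. indicator (A k) (v $ k) :: ennreal)" for v
      by (auto simp: indicator_def prod_zero_iff)
    have "Pi\<^sub>E UNIV A \<in> sets (iid_gauss :: ('k \<Rightarrow> real) measure)"
      by (intro sets_PiM_I_finite) auto
    moreover have "vec_nth -` Pi\<^sub>E UNIV A = ?B"
      by (auto simp: PiE_def Pi_def)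
    ultimately have "emeasure (distr std_gauss_vec iid_gauss vec_nth) (Pi\<^sub>E UNIV A) = emeasure std_gauss_vec ?B"
      using vec_nth_meas by (subst emeasure_distr) (auto simp: std_gauss_vec_def)
    also have "\<dots> = (\<integral>\<^sup>+v. (\<Prod>k\<in>UNIV. ennreal (std_normal_density (v $ k)) * indicator (A k) (v $ k)) \<partial>lborel)"
      unfolding std_gauss_vec_def using B
      by (subst emeasure_density) (auto simp: indicator_B prod_ennreal[symmetric] prod.distrib intro!: nn_integral_cong)
    also have "\<dots> = (\<Prod>k\<in>UNIV. \<integral>\<^sup>+x. ennreal (std_normal_density x) * indicator (A k) x \<partial>lborel)"
      by (rule nn_integral_lborel_vec_prod) measurable
    also have "\<dots> = (\<Prod>k\<in>UNIV. emeasure std_gauss (A k))"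
      unfolding std_gauss_def by (intro prod.cong refl, subst emeasure_density) auto
    finally show "emeasure (distr std_gauss_vec iid_gauss vec_nth) (Pi\<^sub>E UNIV A) = (\<Prod>k\<in>UNIV. emeasure std_gauss (A k))" .
  qed simp_all
qed

lemma integral_iid_gauss_vec_lambda:
  fixes \<Phi> :: "real^'k::finite \<Rightarrow> real"
  assumes [measurable]: "\<Phi> \<in> borel_measurable borel"
  shows "(\<integral>s. \<Phi> (vec_lambda s) \<partial>iid_gauss) = (\<integral>v. \<Phi> v \<partial>std_gauss_vec)"
proof -
  have "(\<integral>s. \<Phi> (vec_lambda s) \<partial>iid_gauss) = (\<integral>v. \<Phi> (vec_lambda (vec_nth v)) \<partial>std_gauss_vec)"
    by (subst iid_gauss_eq_distr_std_gauss_vec) (simp add: integral_distr std_gauss_vec_def)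
  then show ?thesis by simp
qed

lemma std_gauss_vec_distr_orthogonal_transformation:
  fixes Q :: "real^'k::{finite,wellorder} \<Rightarrow> real^'k::_"
  assumes Q: "orthogonal_transformation Q"
  shows "distr std_gauss_vec borel Q = std_gauss_vec"
proof -
  let ?g = "\<lambda>v::real^'k::_. ennreal (\<Prod>k\<in>UNIV. std_normal_density (v $ k))"
  note Q_meas [measurable] = borel_measurable_orthogonal_transformation[OF Q]
  have density_Q: "?g (Q v) = ?g v" for v
    using Q by (simp add: prod_std_normal_density_vec orthogonal_transformation_norm)
  show ?thesis
  proof (rule measure_eqI)
    fix A assume "A \<in> sets (distr std_gauss_vec borel Q)"
    then have A [measurable]: "A \<in> sets borel" by simp
    have "emeasure (distr std_gauss_vec borel Q) A = (\<integral>\<^sup>+v. ?g (Q v) * indicator A (Q v) \<partial>lborel)"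
      unfolding std_gauss_vec_def using measurable_sets_borel[OF Q_meas A]
      by (subst emeasure_distr, simp_all, subst emeasure_density)
        (auto simp: density_Q indicator_def intro!: nn_integral_cong)
    also have "\<dots> = (\<integral>\<^sup>+w. ?g w * indicator A w \<partial>distr lborel borel Q)"
      by (subst nn_integral_distr) auto
    also have "\<dots> = emeasure std_gauss_vec A"
      unfolding lborel_distr_orthogonal_transformation[OF Q] std_gauss_vec_def
      by (subst emeasure_density) auto
    finally show "emeasure (distr std_gauss_vec borel Q) A = emeasure std_gauss_vec A" .
  qed (simp add: std_gauss_vec_def)
qed

lemma integral_std_gauss_vec_orthogonal_transformation:
  fixes Q :: "real^'k::{finite,wellorder} \<Rightarrow> real^'k::_" and \<Phi> :: "real^'k::_ \<Rightarrow> real"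
  assumes Q: "orthogonal_transformation Q" and [measurable]: "\<Phi> \<in> borel_measurable borel"
  shows "(\<integral>v. \<Phi> (Q v) \<partial>std_gauss_vec) = (\<integral>v. \<Phi> v \<partial>std_gauss_vec)"
proof -
  note [measurable] = borel_measurable_orthogonal_transformation[OF Q]
  have "(\<integral>v. \<Phi> (Q v) \<partial>std_gauss_vec) = (\<integral>v. \<Phi> v \<partial>distr std_gauss_vec borel Q)"
    by (rule integral_distr[symmetric]) (auto simp: std_gauss_vec_def)
  then show ?thesis
    by (simp only: std_gauss_vec_distr_orthogonal_transformation[OF Q])
qed

section \<open>Dependence on the Gram matrix only\<close>

lemma orthogonal_transformation_reflection:
  fixes a :: "'a::euclidean_space"
  shows "orthogonal_transformation (\<lambda>z. z - (2 * (a \<bullet> z) / (a \<bullet> a)) *\<^sub>R a)"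
proof (cases "a = 0")
  case False
  then have "a \<bullet> a \<noteq> 0" by simp
  show ?thesis
    unfolding orthogonal_transformation_def
  proof (intro conjI allI)
    show "linear (\<lambda>z. z - (2 * (a \<bullet> z) / (a \<bullet> a)) *\<^sub>R a)"
      by (intro linearI) (auto simp: inner_add_right scaleR_add_left add_divide_distrib algebra_simps)
    fix v w :: 'a
    show "(v - (2 * (a \<bullet> v) / (a \<bullet> a)) *\<^sub>R a) \<bullet> (w - (2 * (a \<bullet> w) / (a \<bullet> a)) *\<^sub>R a) = v \<bullet> w"
      using \<open>a \<bullet> a \<noteq> 0\<close> by (simp add: inner_diff_left inner_diff_right inner_commute field_simps)
  qed
qed simp

lemma orthogonal_transformation_exists_inner_eq:
  fixes V U :: "'i \<Rightarrow> 'a::euclidean_space"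
  assumes "finite I" and "\<And>a b. a \<in> I \<Longrightarrow> b \<in> I \<Longrightarrow> V a \<bullet> V b = U a \<bullet> U b"
  shows "\<exists>Q. orthogonal_transformation Q \<and> (\<forall>a\<in>I. Q (V a) = U a)"
  using assms
proof (induction I rule: finite_induct)
  case empty
  show ?case using orthogonal_transformation_id by blast
next
  case (insert c I)
  then obtain Q where Q: "orthogonal_transformation Q" "\<forall>a\<in>I. Q (V a) = U a"
    by auto
  define y where "y = Q (V c)"
  define a where "a = y - U c"
  \<comment> \<open>The reflection in \<open>a\<close> swaps \<open>y\<close> and \<open>U c\<close>, which have equal norms,
    and fixes the \<open>U b\<close> for \<open>b \<in> I\<close>, which are orthogonal to \<open>a\<close>.\<close>
  define H where "H = (\<lambda>z. z - (2 * (a \<bullet> z) / (a \<bullet> a)) *\<^sub>R a)"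
  have y_norm: "y \<bullet> y = U c \<bullet> U c"
    using Q(1) insert.prems[of c c] unfolding y_def orthogonal_transformation_def by simp
  have "a \<bullet> U b = 0" if "b \<in> I" for b
  proof -
    have "y \<bullet> U b = V c \<bullet> V b"
      using Q that unfolding y_def orthogonal_transformation_def by metis
    with insert.prems that show ?thesis unfolding a_def by (simp add: inner_diff_left)
  qed
  then have H_fix: "H (U b) = U b" if "b \<in> I" for b
    unfolding H_def using that by simp
  have H_y: "H y = U c"
  proof (cases "a = 0")
    case False
    have "a \<bullet> a = 2 * (a \<bullet> y)"
      unfolding a_def using y_norm by (simp add: inner_diff_left inner_diff_right inner_commute)
    with False have "2 * (a \<bullet> y) / (a \<bullet> a) = 1" by (metis divide_self inner_eq_zero_iff)
    then have "H y = y - a" unfolding H_def by (simp only: scaleR_one)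
    then show ?thesis unfolding a_def by simp
  qed (simp add: H_def a_def)
  have "orthogonal_transformation (H \<circ> Q)"
    unfolding H_def by (intro orthogonal_transformation_compose orthogonal_transformation_reflection Q(1))
  with Q(2) H_fix H_y show ?case unfolding y_def by (intro exI[of _ "H \<circ> Q"]) (auto simp: comp_def)
qed

text \<open>The paper's \<open>F\<^sub>k[f]\<close>, in which each coin has been replaced by its mean \<open>f(r \<cdot> v\<^sub>i)\<close>.\<close>

definition gauss_corr :: "(real^'d::finite \<Rightarrow> real) \<Rightarrow> (real^'n::finite) list \<Rightarrow> real" where
  "gauss_corr f vs = (\<integral>r. (\<Prod>i<length vs. f (gauss_proj r (vs ! i))) \<partial>iid_gauss)"

text \<open>For injective \<open>\<iota>\<close>, this embeds \<open>\<real>\<^sup>n\<close> into the \<open>j\<close>-th of \<open>d\<close> mutually orthogonal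
  coordinate blocks of \<open>\<real>\<^sup>k\<close>, so that a single Gaussian vector of \<open>\<real>\<^sup>k\<close> carries all the
  Gaussian vectors \<open>r\<^sup>(\<^sup>j\<^sup>)\<close> of the rounding scheme.\<close>

definition block_embed :: "('d \<times> 'n \<Rightarrow> 'k) \<Rightarrow> 'd \<Rightarrow> real^'n::finite \<Rightarrow> real^'k::finite" where
  "block_embed \<iota> j v = (\<chi> k. \<Sum>l\<in>UNIV. if \<iota> (j, l) = k then v $ l else 0)"

lemma inner_block_embed_right:
  "u \<bullet> block_embed \<iota> j v = (\<Sum>l\<in>UNIV. u $ \<iota> (j, l) * v $ l)"
proof -
  have "u \<bullet> block_embed \<iota> j v = (\<Sum>k\<in>UNIV. \<Sum>l\<in>UNIV. if \<iota> (j, l) = k then u $ k * v $ l else 0)"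
    by (simp add: inner_vec_def block_embed_def sum_distrib_left if_distrib cong: if_cong)
  also have "\<dots> = (\<Sum>l\<in>UNIV. u $ \<iota> (j, l) * v $ l)"
    by (subst sum.swap) (simp add: sum.delta)
  finally show ?thesis .
qed

lemma block_embed_nth:
  assumes "inj \<iota>"
  shows "block_embed \<iota> j v $ \<iota> (j', l) = (if j = j' then v $ l else 0)"
proof -
  have "block_embed \<iota> j v $ \<iota> (j', l) = (\<Sum>l'\<in>UNIV. if (j, l') = (j', l) then v $ l' else 0)"
    unfolding block_embed_def using assms by (simp add: inj_eq)
  then show ?thesis by (cases "j = j'") simp_all
qed

lemma inner_block_embed:
  assumes "inj \<iota>"
  shows "block_embed \<iota> j v \<bullet> block_embed \<iota> j' w = (if j = j' then v \<bullet> w else 0)"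
proof -
  have "block_embed \<iota> j v \<bullet> block_embed \<iota> j' w = (\<Sum>l\<in>UNIV. block_embed \<iota> j v $ \<iota> (j', l) * w $ l)"
    by (rule inner_block_embed_right)
  also have "\<dots> = (\<Sum>l\<in>UNIV. (if j = j' then v $ l else 0) * w $ l)"
    by (simp add: block_embed_nth[OF assms])
  finally show ?thesis by (simp add: inner_vec_def)
qed

lemma gauss_proj_reindex:
  "gauss_proj (\<lambda>a. s (\<iota> a)) v = (\<chi> j. vec_lambda s \<bullet> block_embed \<iota> j v)"
  unfolding gauss_proj_def inner_block_embed_right by simp

lemma borel_measurable_gauss_proj [measurable]:
  "(\<lambda>r. gauss_proj r v) \<in> borel_measurable (PiM UNIV (\<lambda>_. borel))"
  unfolding gauss_proj_def by (rule borel_measurable_vec_lambda) measurable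

lemma borel_measurable_vec_lambda_inner [measurable]:
  "(\<lambda>u. (\<chi> j. u \<bullet> W j) :: real^'d::finite) \<in> borel_measurable borel"
  by (intro borel_measurable_vec_lambda borel_measurable_continuous_onI continuous_intros)

lemma integral_iid_gauss_reindex:
  fixes \<iota> :: "'a \<Rightarrow> 'k" and \<Phi> :: "('a \<Rightarrow> real) \<Rightarrow> real"
  assumes "inj \<iota>" and [measurable]: "\<Phi> \<in> borel_measurable (PiM UNIV (\<lambda>_. borel))"
  shows "(\<integral>r. \<Phi> r \<partial>iid_gauss) = (\<integral>s. \<Phi> (\<lambda>a. s (\<iota> a)) \<partial>iid_gauss)"
proof -
  let ?t = "\<lambda>s. \<lambda>a. s (\<iota> a)"
  have "distr iid_gauss iid_gauss ?t = (iid_gauss :: ('a \<Rightarrow> real) measure)"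
    using distr_PiM_reindex[of UNIV "\<lambda>_. std_gauss" \<iota> UNIV] assms(1) prob_space_std_gauss
    by (simp add: restrict_def)
  moreover have "?t \<in> measurable iid_gauss iid_gauss"
    by (rule measurable_PiM_single') (auto simp: space_PiM)
  ultimately show ?thesis
    by (metis \<open>\<Phi> \<in> borel_measurable _\<close> integral_distr measurable_PiM_std_gauss_eq)
qed

lemma gauss_corr_eq_integral_std_gauss_vec:
  fixes f :: "real^'d::finite \<Rightarrow> real" and \<iota> :: "'d \<times> 'n::finite \<Rightarrow> 'k::finite"
  assumes [measurable]: "f \<in> borel_measurable borel" and "inj \<iota>"
  shows "gauss_corr f vs =
    (\<integral>u. (\<Prod>i<length vs. f (\<chi> j. u \<bullet> block_embed \<iota> j (vs ! i))) \<partial>std_gauss_vec)"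
proof -
  have "gauss_corr f vs = (\<integral>s. (\<Prod>i<length vs. f (gauss_proj (\<lambda>a. s (\<iota> a)) (vs ! i))) \<partial>iid_gauss)"
    unfolding gauss_corr_def by (rule integral_iid_gauss_reindex[OF \<open>inj \<iota>\<close>]) measurable
  also have "\<dots> = (\<integral>s. (\<Prod>i<length vs. f (\<chi> j. vec_lambda s \<bullet> block_embed \<iota> j (vs ! i))) \<partial>iid_gauss)"
    by (simp add: gauss_proj_reindex)
  also have "\<dots> = (\<integral>u. (\<Prod>i<length vs. f (\<chi> j. u \<bullet> block_embed \<iota> j (vs ! i))) \<partial>std_gauss_vec)"
    by (rule integral_iid_gauss_vec_lambda) measurable
  finally show ?thesis .
qed

lemma ex_inj_bit0: "\<exists>\<beta> :: 'a::finite \<Rightarrow> 'a bit0. inj \<beta>"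
  using card_le_inj[of "UNIV :: 'a set" "UNIV :: 'a bit0 set"] by auto

lemma gauss_corr_eq_if_inner_eq:
  fixes f :: "real^'d::finite \<Rightarrow> real" and vs :: "(real^'n::finite) list" and ws :: "(real^'m::finite) list"
  assumes [measurable]: "f \<in> borel_measurable borel"
    and len: "length ws = length vs"
    and inner: "\<And>i j. i < length vs \<Longrightarrow> j < length vs \<Longrightarrow> vs ! i \<bullet> vs ! j = ws ! i \<bullet> ws ! j"
  shows "gauss_corr f vs = gauss_corr f ws"
proof -
  \<comment> \<open>Embed both families into one space; \<open>bit0\<close> only provides the \<open>wellorder\<close> sort
    demanded by the change-of-variables results behind the rotation invariance.\<close>
  obtain \<beta> :: "'d \<times> 'n \<times> 'm \<Rightarrow> ('d \<times> 'n \<times> 'm) bit0" where "inj \<beta>"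
    using ex_inj_bit0 by blast
  define \<iota>N where "\<iota>N = (\<lambda>(j, l). \<beta> (j, l, undefined))"
  define \<iota>M where "\<iota>M = (\<lambda>(j, l). \<beta> (j, undefined, l))"
  have inj: "inj \<iota>N" "inj \<iota>M"
    using \<open>inj \<beta>\<close> by (auto simp: inj_def \<iota>N_def \<iota>M_def)
  define V where "V = (\<lambda>(i, j). block_embed \<iota>N j (vs ! i))"
  define U where "U = (\<lambda>(i, j). block_embed \<iota>M j (ws ! i))"
  have "\<exists>Q. orthogonal_transformation Q \<and> (\<forall>a\<in>{..<length vs} \<times> UNIV. Q (V a) = U a)"
    by (rule orthogonal_transformation_exists_inner_eq)
      (auto simp: V_def U_def inner_block_embed[OF inj(1)] inner_block_embed[OF inj(2)] inner)
  then obtain Q where Q: "orthogonal_transformation Q"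
    and QV: "\<And>i j. i < length vs \<Longrightarrow> Q (V (i, j)) = U (i, j)"
    by auto
  let ?\<Phi> = "\<lambda>W u. \<Prod>i<length vs. f (\<chi> j. u \<bullet> W (i, j))"
  have "gauss_corr f vs = (\<integral>u. ?\<Phi> V u \<partial>std_gauss_vec)"
    unfolding V_def by (simp add: gauss_corr_eq_integral_std_gauss_vec[OF _ inj(1)])
  also have "\<dots> = (\<integral>u. ?\<Phi> U (Q u) \<partial>std_gauss_vec)"
    using Q by (simp add: QV[symmetric] orthogonal_transformation_def)
  also have "\<dots> = (\<integral>u. ?\<Phi> U u \<partial>std_gauss_vec)"
    by (rule integral_std_gauss_vec_orthogonal_transformation[OF Q]) measurable
  also have "\<dots> = gauss_corr f ws"
    unfolding U_def using len by (simp add: gauss_corr_eq_integral_std_gauss_vec[OF _ inj(2)])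
  finally show ?thesis .
qed

section \<open>Averaging out the coins\<close>

lemma prob_space_unif01: "prob_space unif01"
  unfolding unif01_def by (intro prob_space_uniform_measure) auto

lemma sets_unif01 [simp, measurable_cong]: "sets unif01 = sets borel"
  by (simp add: unif01_def)

lemma integral_unif01_sign:
  assumes "0 \<le> p" "p \<le> 1"
  shows "(\<integral>t. (if t \<le> p then 1 else -1 :: real) \<partial>unif01) = 2 * p - 1"
proof -
  interpret prob_space unif01 by (rule prob_space_unif01)
  have "measure unif01 {..p} = measure lborel ({0..1} \<inter> {..p}) / measure lborel {0..1::real}"
    unfolding unif01_def by (subst measure_uniform_measure) auto
  also have "\<dots> = p" using assms by simp
  finally have "measure unif01 {..p} = p" .
  moreover have "(\<lambda>t. if t \<le> p then 1 else -1 :: real) = (\<lambda>t. 2 * indicator {..p} t - 1)"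
    by (auto simp: indicator_def)
  moreover have "integrable unif01 (indicator {..p} :: real \<Rightarrow> real)"
    by (rule integrable_const_bound[where B=1]) auto
  ultimately show ?thesis by (simp add: prob_space)
qed

lemma integral_PiM_unif01_signs:
  fixes k :: nat
  assumes "\<And>i. i < k \<Longrightarrow> 0 \<le> p i \<and> p i \<le> 1"
  shows "(\<integral>u. (\<Prod>i<k. if u i \<le> p i then 1 else -1 :: real) \<partial>PiM {..<k} (\<lambda>_. unif01)) =
    (\<Prod>i<k. 2 * p i - 1)"
proof -
  interpret product_prob_space "\<lambda>_. unif01" "{..<k}"
    by (simp add: product_prob_space_def product_sigma_finite_def prob_space_unif01
        prob_space_imp_sigma_finite product_prob_space_axioms_def)
  have "finite_measure unif01"
    using prob_space_unif01 by (simp add: prob_space_def)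
  let ?sign = "\<lambda>i t. if t \<le> p i then 1 else -1 :: real"
  have "(\<integral>u. (\<Prod>i<k. ?sign i (u i)) \<partial>PiM {..<k} (\<lambda>_. unif01)) = (\<Prod>i<k. \<integral>t. ?sign i t \<partial>unif01)"
    by (rule product_integral_prod)
      (auto intro!: finite_measure.integrable_const_bound[OF \<open>finite_measure unif01\<close>, where B=1])
  also have "\<dots> = (\<Prod>i<k. 2 * p i - 1)"
    using assms by (simp add: integral_unif01_sign)
  finally show ?thesis .
qed

lemma round_corr_eq_gauss_corr:
  fixes f :: "real^'d::finite \<Rightarrow> real" and vs :: "(real^'n::finite) list"
  assumes [measurable]: "f \<in> borel_measurable borel" and f_bounded: "\<And>y. -1 \<le> f y \<and> f y \<le> 1"
  shows "round_corr f vs = gauss_corr f vs"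
proof -
  let ?k = "length vs"
  let ?G = "iid_gauss :: ('d \<times> 'n \<Rightarrow> real) measure"
  let ?U = "PiM {..<?k} (\<lambda>_. unif01)"
  let ?p = "\<lambda>r i. (1 + f (gauss_proj r (vs ! i))) / 2"
  interpret G: prob_space ?G by (rule prob_space_PiM_std_gauss)
  interpret U: prob_space ?U by (intro prob_space_PiM prob_space_unif01)
  interpret pair_prob_space ?G ?U ..
  have p_bounds: "0 \<le> ?p r i \<and> ?p r i \<le> 1" for r i
    using f_bounded[of "gauss_proj r (vs ! i)"] by simp
  have "(\<lambda>\<omega>. round_X f vs i \<omega>) \<in> borel_measurable (?G \<Otimes>\<^sub>M ?U)" if "i < ?k" for i
  proof -
    have [measurable]: "(\<lambda>\<omega>. snd \<omega> i) \<in> borel_measurable (?G \<Otimes>\<^sub>M ?U)"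
      using that by (intro measurable_compose[OF measurable_snd] measurable_component_singleton) auto
    show ?thesis unfolding round_X_def by measurable
  qed
  then have "integrable (?G \<Otimes>\<^sub>M ?U) (\<lambda>\<omega>. \<Prod>i<?k. round_X f vs i \<omega>)"
    by (intro integrable_const_bound[where B=1] AE_I2 borel_measurable_prod)
      (auto simp: round_X_def abs_prod prod_le_1)
  then have "round_corr f vs = (\<integral>r. (\<integral>u. (\<Prod>i<?k. round_X f vs i (r, u)) \<partial>?U) \<partial>?G)"
    unfolding round_corr_def round_space_def by (rule integral_fst'[symmetric])
  also have "\<dots> = (\<integral>r. (\<Prod>i<?k. 2 * ?p r i - 1) \<partial>?G)"
  proof (intro Bochner_Integration.integral_cong refl)
    fix r
    have "(\<integral>u. (\<Prod>i<?k. round_X f vs i (r, u)) \<partial>?U) =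
        (\<integral>u. (\<Prod>i<?k. if u i \<le> ?p r i then 1 else -1) \<partial>?U)"
      by (simp add: round_X_def)
    also have "\<dots> = (\<Prod>i<?k. 2 * ?p r i - 1)"
      by (rule integral_PiM_unif01_signs) (rule p_bounds)
    finally show "(\<integral>u. (\<Prod>i<?k. round_X f vs i (r, u)) \<partial>?U) = (\<Prod>i<?k. 2 * ?p r i - 1)" .
  qed
  also have "\<dots> = gauss_corr f vs"
    by (simp add: gauss_corr_def add_divide_distrib)
  finally show ?thesis .
qed

section \<open>Equiangular families\<close>

lemma measurable_PiM_uncurry:
  "(\<lambda>Y a. Y (snd a) (fst a)) \<in>
    measurable (PiM (UNIV :: 'c set) (\<lambda>_. PiM (UNIV :: 'd set) (\<lambda>_. M))) (PiM UNIV (\<lambda>_ :: 'd \<times> 'c. M))"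
proof (rule measurable_PiM_single')
  fix a :: "'d \<times> 'c"
  have "(\<lambda>Y. Y (snd a)) \<in> measurable (PiM UNIV (\<lambda>_. PiM UNIV (\<lambda>_. M))) (PiM UNIV (\<lambda>_. M))" by simp
  then show "(\<lambda>Y. Y (snd a) (fst a)) \<in> measurable (PiM UNIV (\<lambda>_. PiM UNIV (\<lambda>_. M))) M"
    by (rule measurable_compose) simp
qed (auto simp: space_PiM)

lemma distr_PiM_PiM_curry:
  assumes M: "prob_space M"
  shows "distr (PiM (UNIV :: 'c::finite set) (\<lambda>_. PiM (UNIV :: 'd::finite set) (\<lambda>_. M)))
      (PiM UNIV (\<lambda>_ :: 'd \<times> 'c. M)) (\<lambda>Y a. Y (snd a) (fst a)) = PiM UNIV (\<lambda>_. M)"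
    (is "distr ?Y ?P ?t = _")
proof -
  interpret P: product_sigma_finite "\<lambda>_ :: 'd \<times> 'c. M"
    using M by (simp add: product_sigma_finite_def prob_space_imp_sigma_finite)
  interpret D: product_sigma_finite "\<lambda>_ :: 'd. M"
    using M by (simp add: product_sigma_finite_def prob_space_imp_sigma_finite)
  interpret Y: product_sigma_finite "\<lambda>_ :: 'c. PiM (UNIV :: 'd set) (\<lambda>_. M)"
    using M by (simp add: product_sigma_finite_def prob_space_imp_sigma_finite prob_space_PiM)
  show ?thesis
  proof (rule P.PiM_eqI)
    show "sets (distr ?Y ?P ?t) = sets ?P" by simp
    fix A :: "'d \<times> 'c \<Rightarrow> _" assume A: "\<And>i. i \<in> UNIV \<Longrightarrow> A i \<in> sets M"
    have "?t -` Pi\<^sub>E UNIV A \<inter> space ?Y = Pi\<^sub>E UNIV (\<lambda>c. Pi\<^sub>E UNIV (\<lambda>j. A (j, c)))"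
      using sets.sets_into_space[OF A] by (fastforce simp: space_PiM PiE_def Pi_def)
    then have "emeasure (distr ?Y ?P ?t) (Pi\<^sub>E UNIV A) = emeasure ?Y (Pi\<^sub>E UNIV (\<lambda>c. Pi\<^sub>E UNIV (\<lambda>j. A (j, c))))"
      using measurable_PiM_uncurry A by (subst emeasure_distr) (auto intro!: sets_PiM_I_finite)
    also have "\<dots> = (\<Prod>c\<in>UNIV. \<Prod>j\<in>UNIV. emeasure M (A (j, c)))"
      using A by (subst Y.emeasure_PiM) (auto intro!: sets_PiM_I_finite simp: D.emeasure_PiM)
    also have "\<dots> = (\<Prod>a\<in>UNIV. emeasure M (A a))"
      by (subst prod.swap) (simp add: prod.cartesian_product UNIV_Times_UNIV)
    finally show "emeasure (distr ?Y ?P ?t) (Pi\<^sub>E UNIV A) = (\<Prod>a\<in>UNIV. emeasure M (A a))" .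
  qed simp
qed

lemma integral_PiM_uncurry:
  fixes \<Phi> :: "('d::finite \<times> 'c::finite \<Rightarrow> 'a) \<Rightarrow> real"
  assumes "prob_space M" and "\<Phi> \<in> borel_measurable (PiM UNIV (\<lambda>_. M))"
  shows "(\<integral>r. \<Phi> r \<partial>PiM UNIV (\<lambda>_. M)) =
    (\<integral>Y. \<Phi> (\<lambda>a. Y (snd a) (fst a)) \<partial>PiM (UNIV :: 'c set) (\<lambda>_. PiM (UNIV :: 'd set) (\<lambda>_. M)))"
  using integral_distr[OF measurable_PiM_uncurry assms(2)]
  by (simp add: distr_PiM_PiM_curry[OF assms(1)])

lemma integral_PiM_option:
  fixes \<Psi> :: "('e option \<Rightarrow> 'a) \<Rightarrow> real"
  assumes M: "prob_space M" and \<Psi>_meas: "\<Psi> \<in> borel_measurable (PiM UNIV (\<lambda>_. M))"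
  shows "(\<integral>Y. \<Psi> Y \<partial>PiM UNIV (\<lambda>_. M)) =
    (\<integral>p. \<Psi> ((snd p)(None := fst p)) \<partial>(M \<Otimes>\<^sub>M PiM (range Some) (\<lambda>_. M)))"
proof -
  let ?S = "range (Some :: 'e \<Rightarrow> 'e option)"
  let ?u = "\<lambda>(z, X). X(None := z)"
  have "(UNIV :: 'e option set) = insert None ?S"
    by (auto intro: option.exhaust)
  then have distr_u: "distr (M \<Otimes>\<^sub>M PiM ?S (\<lambda>_. M)) (PiM UNIV (\<lambda>_. M)) ?u = PiM UNIV (\<lambda>_. M)"
    using distr_pair_PiM_eq_PiM[of ?S "\<lambda>_. M" None] M by simp
  have u_meas: "?u \<in> measurable (M \<Otimes>\<^sub>M PiM ?S (\<lambda>_. M)) (PiM UNIV (\<lambda>_. M))"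
  proof (rule measurable_PiM_single')
    fix c :: "'e option"
    show "(\<lambda>p. ?u p c) \<in> measurable (M \<Otimes>\<^sub>M PiM ?S (\<lambda>_. M)) M"
      by (cases c) (simp_all add: case_prod_beta)
  qed (auto simp: space_PiM space_pair_measure PiE_iff)
  have "(\<integral>Y. \<Psi> Y \<partial>PiM UNIV (\<lambda>_. M)) = (\<integral>p. \<Psi> (?u p) \<partial>(M \<Otimes>\<^sub>M PiM ?S (\<lambda>_. M)))"
    by (subst distr_u[symmetric]) (rule integral_distr[OF u_meas \<Psi>_meas])
  then show ?thesis by (simp add: case_prod_beta)
qed

lemma integral_PiM_option_prod:
  fixes g :: "'a \<Rightarrow> 'a \<Rightarrow> real"
  assumes M: "prob_space M"
    and g_meas [measurable]: "(\<lambda>(z, y). g z y) \<in> borel_measurable (M \<Otimes>\<^sub>M M)"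
    and g_bounded: "\<And>z y. \<bar>g z y\<bar> \<le> 1"
  shows "(\<integral>Y. (\<Prod>e\<in>UNIV. g (Y None) (Y (Some e))) \<partial>PiM (UNIV :: 'e::finite option set) (\<lambda>_. M)) =
    (\<integral>z. (\<integral>y. g z y \<partial>M) ^ CARD('e) \<partial>M)"
proof -
  let ?S = "range (Some :: 'e \<Rightarrow> 'e option)"
  let ?R = "PiM ?S (\<lambda>_. M)"
  interpret M: prob_space M by (rule M)
  interpret R: prob_space ?R by (intro prob_space_PiM M)
  interpret pair_prob_space M ?R ..
  interpret R_prod: product_prob_space "\<lambda>_. M" ?S
    by (simp add: product_prob_space_def product_sigma_finite_def M prob_space_imp_sigma_finite
        product_prob_space_axioms_def)
  have "(\<lambda>Y. \<Prod>e::'e\<in>UNIV. g (Y None) (Y (Some e))) \<in> borel_measurable (PiM UNIV (\<lambda>_. M))"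
    by measurable
  then have "(\<integral>Y. (\<Prod>e::'e\<in>UNIV. g (Y None) (Y (Some e))) \<partial>PiM UNIV (\<lambda>_. M)) =
      (\<integral>p. (\<Prod>c\<in>?S. g (fst p) (snd p c)) \<partial>(M \<Otimes>\<^sub>M ?R))"
    by (simp add: integral_PiM_option[OF M] prod.reindex)
  also have "\<dots> = (\<integral>z. (\<integral>X. (\<Prod>c\<in>?S. g z (X c)) \<partial>?R) \<partial>M)"
  proof -
    have "(\<lambda>p. \<Prod>c\<in>?S. g (fst p) (snd p c)) \<in> borel_measurable (M \<Otimes>\<^sub>M ?R)"
      by measurable
    then have "integrable (M \<Otimes>\<^sub>M ?R) (\<lambda>p. \<Prod>c\<in>?S. g (fst p) (snd p c))"
      by (intro integrable_const_bound[where B=1] AE_I2) (auto simp: abs_prod prod_le_1 g_bounded)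
    from integral_fst'[OF this] show ?thesis by simp
  qed
  also have "\<dots> = (\<integral>z. (\<integral>y. g z y \<partial>M) ^ CARD('e) \<partial>M)"
  proof (intro Bochner_Integration.integral_cong refl)
    fix z assume "z \<in> space M"
    then have "g z \<in> borel_measurable M"
      using measurable_Pair2[OF g_meas] by simp
    then have "(\<integral>X. (\<Prod>c\<in>?S. g z (X c)) \<partial>?R) = (\<Prod>c\<in>?S. \<integral>y. g z y \<partial>M)"
      by (intro R_prod.product_integral_prod) (auto intro!: M.integrable_const_bound[where B=1] g_bounded)
    then show "(\<integral>X. (\<Prod>c\<in>?S. g z (X c)) \<partial>?R) = (\<integral>y. g z y \<partial>M) ^ CARD('e)"
      by (simp add: card_image)
  qed
  finally show ?thesis .
qed

definition canon :: "real \<Rightarrow> 'e \<Rightarrow> real^('e::finite option)" where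
  "canon x e = (\<chi> c. if c = None then sqrt x else if c = Some e then sqrt (1 - x) else 0)"

lemma inner_canon:
  assumes "0 \<le> x" "x \<le> 1"
  shows "canon x e \<bullet> canon x e' = x + (if e = e' then 1 - x else 0)"
proof -
  have "canon x e \<bullet> canon x e' =
      (\<Sum>c\<in>UNIV. (if c = None then x else 0) + (if e = e' \<and> c = Some e then 1 - x else 0))"
    using assms by (auto simp: inner_vec_def canon_def intro!: sum.cong)
  then show ?thesis by (simp add: sum.distrib)
qed

lemma gauss_proj_canon:
  "gauss_proj r (canon x e) = (\<chi> j. sqrt x * r (j, None) + sqrt (1 - x) * r (j, Some e))"
proof -
  have "canon x e $ c = (if c = None then sqrt x else 0) + (if c = Some e then sqrt (1 - x) else 0)" for c
    by (auto simp: canon_def)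
  then show ?thesis
    unfolding gauss_proj_def
    by (simp add: distrib_left sum.distrib if_distrib[of "\<lambda>t. _ * t"] mult.commute cong: if_cong)
qed

text \<open>The Ornstein-Uhlenbeck operator \<open>U\<^sub>\<rho>\<close> with \<open>\<rho> = \<surd>x\<close>, applied to \<open>f\<close>.\<close>

definition noise_op :: "(real^'d::finite \<Rightarrow> real) \<Rightarrow> real \<Rightarrow> ('d \<Rightarrow> real) \<Rightarrow> real" where
  "noise_op f x z = (\<integral>y. f (\<chi> j. sqrt x * z j + sqrt (1 - x) * y j) \<partial>iid_gauss)"

lemma borel_measurable_noise_op_integrand:
  assumes [measurable]: "f \<in> borel_measurable borel"
  shows "(\<lambda>(z, y). f (\<chi> j. sqrt x * z j + sqrt (1 - x) * y j)) \<in> borel_measurable (iid_gauss \<Otimes>\<^sub>M iid_gauss)"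
proof -
  have "(\<lambda>(z, y). (\<chi> j. sqrt x * z j + sqrt (1 - x) * y j) :: real^'d::finite) \<in> borel_measurable (iid_gauss \<Otimes>\<^sub>M iid_gauss)"
    unfolding case_prod_beta by (rule borel_measurable_vec_lambda) measurable
  then show ?thesis unfolding case_prod_beta by measurable
qed

lemma
  fixes f :: "real^'d::finite \<Rightarrow> real"
  assumes f_meas: "f \<in> borel_measurable borel" and f_bounded: "\<And>y. -1 \<le> f y \<and> f y \<le> 1"
  shows borel_measurable_noise_op: "noise_op f x \<in> borel_measurable iid_gauss"
    and abs_noise_op_le_1: "\<bar>noise_op f x z\<bar> \<le> 1"
proof -
  interpret prob_space "iid_gauss :: ('d \<Rightarrow> real) measure" by (rule prob_space_PiM_std_gauss)
  note g_meas = borel_measurable_noise_op_integrand[OF f_meas, of x]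
  show "noise_op f x \<in> borel_measurable iid_gauss"
    unfolding noise_op_def using borel_measurable_lebesgue_integral[OF g_meas] by simp
  have "(\<lambda>y. f (\<chi> j. sqrt x * z j + sqrt (1 - x) * y j)) \<in> borel_measurable iid_gauss"
    using measurable_Pair2[OF g_meas, of z] by (simp add: space_PiM)
  then have "integrable iid_gauss (\<lambda>y. f (\<chi> j. sqrt x * z j + sqrt (1 - x) * y j))"
    by (rule integrable_const_bound[where B=1, rotated]) (simp add: abs_le_iff f_bounded)
  then show "\<bar>noise_op f x z\<bar> \<le> 1"
    unfolding noise_op_def abs_le_iff
    by (auto intro!: integral_ge_const integral_le_const simp: f_bounded minus_le_iff)
qed

lemma noise_op_power_le_1:
  assumes "f \<in> borel_measurable borel" and "\<And>y. -1 \<le> f y \<and> f y \<le> 1"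
  shows "noise_op f x z ^ n \<le> 1"
proof -
  have "\<bar>noise_op f x z\<bar> ^ n \<le> 1"
    using abs_noise_op_le_1[OF assms] by (simp add: power_le_one)
  then show ?thesis
    by (metis abs_ge_self order_trans power_abs)
qed

lemma prod_lessThan_nth_map_enum:
  "(\<Prod>i<length (map h Enum.enum). F (map h Enum.enum ! i)) = (\<Prod>e\<in>UNIV. F (h (e :: 'e::enum)))"
proof -
  let ?xs = "map (F \<circ> h) (Enum.enum :: 'e list)"
  have "(\<Prod>i<length (map h Enum.enum). F (map h Enum.enum ! i)) = (\<Prod>i<length ?xs. ?xs ! i)"
    by (rule prod.cong) auto
  also have "\<dots> = prod_list ?xs"
    by (simp add: prod.list_conv_set_nth atLeast0LessThan)
  also have "\<dots> = (\<Prod>e\<in>UNIV. F (h e))"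
    by (simp add: UNIV_enum prod.distinct_set_conv_list[OF enum_distinct] comp_def)
  finally show ?thesis .
qed

lemma gauss_corr_canon:
  fixes f :: "real^'d::finite \<Rightarrow> real"
  assumes f_meas [measurable]: "f \<in> borel_measurable borel" and f_bounded: "\<And>y. -1 \<le> f y \<and> f y \<le> 1"
  shows "gauss_corr f (map (canon x) (Enum.enum :: 'e::enum list)) =
    (\<integral>z. noise_op f x z ^ CARD('e) \<partial>iid_gauss)"
proof -
  define g where "g z y = f (\<chi> j. sqrt x * z j + sqrt (1 - x) * y j)" for z y :: "'d \<Rightarrow> real"
  have g_meas: "(\<lambda>(z, y). g z y) \<in> borel_measurable (iid_gauss \<Otimes>\<^sub>M iid_gauss)"
    unfolding g_def by (rule borel_measurable_noise_op_integrand[OF f_meas])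
  let ?\<Phi> = "\<lambda>r. \<Prod>e::'e\<in>UNIV. g (\<lambda>j. r (j, None)) (\<lambda>j. r (j, Some e))"
  have \<Phi>_meas: "?\<Phi> \<in> borel_measurable iid_gauss"
  proof (rule borel_measurable_prod)
    fix e :: 'e
    have "(\<lambda>r. ((\<lambda>j. r (j, None)), (\<lambda>j. r (j, Some e)))) \<in> measurable iid_gauss (iid_gauss \<Otimes>\<^sub>M iid_gauss)"
      by (intro measurable_Pair; rule measurable_PiM_single'; auto simp: space_PiM)
    from measurable_compose[OF this g_meas]
    show "(\<lambda>r. g (\<lambda>j. r (j, None)) (\<lambda>j. r (j, Some e))) \<in> borel_measurable iid_gauss" by simp
  qed
  let ?cs = "map (canon x) (Enum.enum :: 'e list)"
  have "gauss_corr f ?cs = (\<integral>r. ?\<Phi> r \<partial>iid_gauss)"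
    unfolding gauss_corr_def
  proof (intro Bochner_Integration.integral_cong refl)
    fix r :: "'d \<times> 'e option \<Rightarrow> real"
    have "(\<Prod>i<length ?cs. f (gauss_proj r (?cs ! i))) = (\<Prod>e\<in>UNIV. f (gauss_proj r (canon x e)))"
      by (rule prod_lessThan_nth_map_enum)
    then show "(\<Prod>i<length ?cs. f (gauss_proj r (?cs ! i))) = ?\<Phi> r"
      by (simp add: gauss_proj_canon g_def)
  qed
  also have "\<dots> = (\<integral>Y. (\<Prod>e::'e\<in>UNIV. g (Y None) (Y (Some e))) \<partial>PiM UNIV (\<lambda>_. iid_gauss))"
    by (simp add: integral_PiM_uncurry[OF prob_space_std_gauss \<Phi>_meas])
  also have "\<dots> = (\<integral>z. (\<integral>y. g z y \<partial>iid_gauss) ^ CARD('e) \<partial>iid_gauss)"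
    by (rule integral_PiM_option_prod[OF prob_space_PiM_std_gauss g_meas])
      (simp add: g_def abs_le_iff f_bounded minus_le_iff)
  finally show ?thesis
    by (simp add: noise_op_def g_def)
qed

lemma gauss_corr_equiangular:
  fixes f :: "real^'d::finite \<Rightarrow> real" and vs :: "(real^'n::finite) list"
  assumes "0 \<le> x" "x \<le> 1"
    and f_meas: "f \<in> borel_measurable borel" and f_bounded: "\<And>y. -1 \<le> f y \<and> f y \<le> 1"
    and len: "length vs = CARD('e::enum)"
    and inner: "\<And>i j. i < length vs \<Longrightarrow> j < length vs \<Longrightarrow> vs ! i \<bullet> vs ! j = (if i = j then 1 else x)"
  shows "gauss_corr f vs = (\<integral>z. noise_op f x z ^ CARD('e) \<partial>iid_gauss)"
proof -
  let ?cs = "map (canon x) (Enum.enum :: 'e list)"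
  have "gauss_corr f vs = gauss_corr f ?cs"
  proof (rule gauss_corr_eq_if_inner_eq[OF f_meas])
    show "length ?cs = length vs"
      using len by (simp add: card_UNIV_length_enum)
    fix i j assume "i < length vs" "j < length vs"
    then show "vs ! i \<bullet> vs ! j = ?cs ! i \<bullet> ?cs ! j"
      using len inner
      by (simp add: inner_canon[OF \<open>0 \<le> x\<close> \<open>x \<le> 1\<close>] card_UNIV_length_enum
          nth_eq_iff_index_eq[OF enum_distinct])
  qed
  also have "\<dots> = (\<integral>z. noise_op f x z ^ CARD('e) \<partial>iid_gauss)"
    by (rule gauss_corr_canon[OF f_meas f_bounded])
  finally show ?thesis .
qed

lemma (in prob_space) square_expectation_le:
  fixes X :: "'a \<Rightarrow> real"
  assumes "integrable M X" "integrable M (\<lambda>z. X z ^ 2)"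
  shows "(expectation X)\<^sup>2 \<le> expectation (\<lambda>z. X z ^ 2)"
  using variance_eq[OF assms] variance_positive[of X] by simp

theorem mainTheorem5:
  fixes x :: real
    and f :: "real^'d::finite \<Rightarrow> real"
    and v1 v2 v3 v4 :: "real^'n::finite"
    and w1 w2 :: "real^'m::finite"
  assumes "0 \<le> x" "x \<le> 1"
    and "f \<in> borel_measurable borel"
    and "\<And>y. -1 \<le> f y \<and> f y \<le> 1"
    and "norm v1 = 1" "norm v2 = 1" "norm v3 = 1" "norm v4 = 1"
    and "v1 \<bullet> v2 = x" "v1 \<bullet> v3 = x" "v1 \<bullet> v4 = x"
    and "v2 \<bullet> v3 = x" "v2 \<bullet> v4 = x" "v3 \<bullet> v4 = x"
    and "norm w1 = 1" "norm w2 = 1" "w1 \<bullet> w2 = x"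
  shows "round_corr f [v1, v2, v3, v4] \<ge> (round_corr f [w1, w2])\<^sup>2"
proof -
  interpret prob_space "iid_gauss :: ('d \<Rightarrow> real) measure" by (rule prob_space_PiM_std_gauss)
  let ?h = "noise_op f x"
  have h_meas: "?h \<in> borel_measurable iid_gauss"
    using assms(3,4) by (rule borel_measurable_noise_op)
  have "[v1, v2, v3, v4] ! i \<bullet> [v1, v2, v3, v4] ! j = (if i = j then 1 else x)" if "i < 4" "j < 4" for i j
    using that assms(5-14) by (auto simp: numeral_eq_Suc less_Suc_eq norm_eq_1 inner_commute)
  then have E4: "round_corr f [v1, v2, v3, v4] = expectation (\<lambda>z. ?h z ^ 4)"
    using gauss_corr_equiangular[where 'e = "bool \<times> bool" and vs = "[v1, v2, v3, v4]", OF assms(1-4)]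
    by (simp add: round_corr_eq_gauss_corr[OF assms(3,4)] card_cartesian_product flip: UNIV_Times_UNIV)
  have "[w1, w2] ! i \<bullet> [w1, w2] ! j = (if i = j then 1 else x)" if "i < 2" "j < 2" for i j
    using that assms(15-17) by (auto simp: numeral_eq_Suc less_Suc_eq norm_eq_1 inner_commute)
  then have E2: "round_corr f [w1, w2] = expectation (\<lambda>z. ?h z ^ 2)"
    using gauss_corr_equiangular[where 'e = bool and vs = "[w1, w2]", OF assms(1-4)]
    by (simp add: round_corr_eq_gauss_corr[OF assms(3,4)])
  have "(expectation (\<lambda>z. ?h z ^ 2))\<^sup>2 \<le> expectation (\<lambda>z. (?h z ^ 2)\<^sup>2)"
    using h_meas
    by (intro square_expectation_le integrable_const_bound[where B=1] AE_I2)
      (simp_all add: noise_op_power_le_1[OF assms(3,4)] flip: power_mult)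
  then show ?thesis
    unfolding E4 E2 by (simp flip: power_mult)
qed

end
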